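(* Let $\bar{\mathcal{X}}=(\mathcal{X}_0,\mathcal{X}_1)$ be a pair of ri spaces over $(\Omega,\mu)$ with fundamental functions $\phi_0,\phi_1$, and let $\bar\phi\in\mathscr{P}$. Then the fundamental function of the abstract Marcinkiewicz space $M_{\bar\phi}(\bar{\mathcal{X}})$ satisfies $\phi_{M_{\bar\phi}(\bar{\mathcal{X}})}(t)=\bar\phi(\phi_0(t),\phi_1(t))$ for all $t>0$.
   Context: $(\Omega,\mu)$ has $\mu(\Omega)=1$ and is purely non-atomic or completely atomic with atoms of equal measure. An ri space is a Banach function space over $(\Omega,\mu)$ whose norm is rearrangement invariant; its fundamental function is $\phi_{\mathcal{X}}(t)=\|\chi_{E_t}\|_{\mathcal{X}}$ with $\mu(E_t)=t$. $\mathscr{P}$ is the set of functions $\mathbb{R}_{\ge0}\times\mathbb{R}_{\ge0}\to\mathbb{R}_{\ge0}$ that are positively homogeneous, non-zero except at $(0,0)$, and nondecreasing in both arguments. For $\bar\phi\in\mathscr{P}$, its dual is $\bar\phi^*(\alpha,\beta)=1/\bar\phi(1/\alpha,1/\beta)$. The $K$-functional is $K(s_0,s_1,X,\bar{\mathcal{X}})=\inf\{s_0\|X_0\|_{\mathcal{X}_0}+s_1\|X_1\|_{\mathcal{X}_1}:X=X_0+X_1,\ X_i\in\mathcal{X}_i\}$, and $M_{\bar\phi}(\bar{\mathcal{X}})$ is the space of $X\in\mathcal{X}_0+\mathcal{X}_1$ with finite norm $\|X\|_{M_{\bar\phi}(\bar{\mathcal{X}})}=\sup_{s_0,s_1}K(s_0,s_1,X,\bar{\mathcal{X}})/\bar\phi^*(s_0,s_1)$.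 *)

theory Defs
  imports "HOL-Probability.Probability"
begin

definition is_atom :: "'a measure \<Rightarrow> 'a set \<Rightarrow> bool" where
  "is_atom M A \<longleftrightarrow> A \<in> sets M \<and> measure M A > 0 \<and>
     (\<forall>B\<in>sets M. B \<subseteq> A \<longrightarrow> measure M B = 0 \<or> measure M B = measure M A)"

definition nonatomic :: "'a measure \<Rightarrow> bool" where
  "nonatomic M \<longleftrightarrow> (\<forall>A\<in>sets M. measure M A > 0 \<longrightarrow>
     (\<exists>B\<in>sets M. B \<subseteq> A \<and> 0 < measure M B \<and> measure M B < measure M A))"

text \<open>Completely atomic with (finitely many, since the total mass is 1) atoms of equal measure.\<close>
definition equal_atomic :: "'a measure \<Rightarrow> bool" where
  "equal_atomic M \<longleftrightarrow> (\<exists>(n::nat) A. n > 0 \<and> (\<forall>i<n. is_atom M (A i) \<and> measure M (A i) = 1 / real n)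
      \<and> disjoint_family_on A {..<n} \<and> (\<Union>i<n. A i) = space M)"

definition admissible_space :: "'a measure \<Rightarrow> bool" where
  "admissible_space M \<longleftrightarrow> prob_space M \<and> (nonatomic M \<or> equal_atomic M)"

text \<open>A Banach function norm (Luxemburg axioms) on real-valued measurable functions,
  with value \<open>\<infinity>\<close> outside the space. The space is \<open>{f. N f < \<infinity>}\<close>.\<close>
definition banach_function_norm :: "'a measure \<Rightarrow> (('a \<Rightarrow> real) \<Rightarrow> ennreal) \<Rightarrow> bool" where
  "banach_function_norm M N \<longleftrightarrow>
    (\<forall>f\<in>borel_measurable M. N f = 0 \<longleftrightarrow> (AE x in M. f x = 0)) \<and>
    (\<forall>f\<in>borel_measurable M. \<forall>c::real. N (\<lambda>x. c * f x) = ennreal \<bar>c\<bar> * N f) \<and>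
    (\<forall>f\<in>borel_measurable M. \<forall>g\<in>borel_measurable M. N (\<lambda>x. f x + g x) \<le> N f + N g) \<and>
    (\<forall>f\<in>borel_measurable M. \<forall>g\<in>borel_measurable M.
        (AE x in M. \<bar>g x\<bar> \<le> \<bar>f x\<bar>) \<longrightarrow> N g \<le> N f) \<and>
    (\<forall>(fs::nat \<Rightarrow> 'a \<Rightarrow> real) g. (\<forall>n. fs n \<in> borel_measurable M) \<longrightarrow> g \<in> borel_measurable M \<longrightarrow>
        (\<forall>n. AE x in M. 0 \<le> fs n x \<and> fs n x \<le> fs (Suc n) x) \<longrightarrow>
        (AE x in M. (\<lambda>n. fs n x) \<longlonglongrightarrow> g x) \<longrightarrow> (SUP n. N (fs n)) = N g) \<and>
    (\<forall>E\<in>sets M. emeasure M E < \<infinity> \<longrightarrow> N (indicator E) < \<infinity>) \<and>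
    (\<forall>E\<in>sets M. emeasure M E < \<infinity> \<longrightarrow> (\<exists>C::real. \<forall>f\<in>borel_measurable M.
        (\<integral>\<^sup>+x\<in>E. ennreal \<bar>f x\<bar> \<partial>M) \<le> ennreal C * N f))"

definition equimeasurable :: "'a measure \<Rightarrow> ('a \<Rightarrow> real) \<Rightarrow> ('a \<Rightarrow> real) \<Rightarrow> bool" where
  "equimeasurable M f g \<longleftrightarrow> (\<forall>s::real.
     emeasure M {x\<in>space M. \<bar>f x\<bar> > s} = emeasure M {x\<in>space M. \<bar>g x\<bar> > s})"

definition ri_space :: "'a measure \<Rightarrow> (('a \<Rightarrow> real) \<Rightarrow> ennreal) \<Rightarrow> bool" where
  "ri_space M N \<longleftrightarrow> banach_function_norm M N \<and>
     (\<forall>f\<in>borel_measurable M. \<forall>g\<in>borel_measurable M. equimeasurable M f g \<longrightarrow> N f = N g)"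

definition fundamental_function :: "'a measure \<Rightarrow> (('a \<Rightarrow> real) \<Rightarrow> ennreal) \<Rightarrow> real \<Rightarrow> ennreal" where
  "fundamental_function M N t = N (indicator (SOME E. E \<in> sets M \<and> measure M E = t))"

definition class_P :: "(real \<Rightarrow> real \<Rightarrow> real) \<Rightarrow> bool" where
  "class_P \<phi> \<longleftrightarrow>
    (\<forall>a\<ge>0. \<forall>b\<ge>0. \<phi> a b \<ge> 0) \<and>
    (\<forall>l>0. \<forall>a\<ge>0. \<forall>b\<ge>0. \<phi> (l * a) (l * b) = l * \<phi> a b) \<and>
    (\<forall>a\<ge>0. \<forall>b\<ge>0. (a, b) \<noteq> (0, 0) \<longrightarrow> \<phi> a b \<noteq> 0) \<and>
    (\<forall>a\<ge>0. \<forall>a'\<ge>a. \<forall>b\<ge>0. \<forall>b'\<ge>b. \<phi> a b \<le> \<phi> a' b')"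

definition dual_P :: "(real \<Rightarrow> real \<Rightarrow> real) \<Rightarrow> real \<Rightarrow> real \<Rightarrow> real" where
  "dual_P \<phi> a b = 1 / \<phi> (1 / a) (1 / b)"

definition K_functional :: "'a measure \<Rightarrow> (('a \<Rightarrow> real) \<Rightarrow> ennreal) \<Rightarrow> (('a \<Rightarrow> real) \<Rightarrow> ennreal)
    \<Rightarrow> real \<Rightarrow> real \<Rightarrow> ('a \<Rightarrow> real) \<Rightarrow> ennreal" where
  "K_functional M N0 N1 s0 s1 f =
     (INF p \<in> {(f0, f1). f0 \<in> borel_measurable M \<and> f1 \<in> borel_measurable M \<and>
                  N0 f0 < \<infinity> \<and> N1 f1 < \<infinity> \<and> (\<forall>x\<in>space M. f x = f0 x + f1 x)}.
        ennreal s0 * N0 (fst p) + ennreal s1 * N1 (snd p))"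

text \<open>Norm of \<open>M\<^sub>\<phi>(X0,X1)\<close> (value \<open>\<infinity>\<close> for functions not in the space).\<close>
definition marcinkiewicz_norm :: "'a measure \<Rightarrow> (real \<Rightarrow> real \<Rightarrow> real) \<Rightarrow> (('a \<Rightarrow> real) \<Rightarrow> ennreal)
    \<Rightarrow> (('a \<Rightarrow> real) \<Rightarrow> ennreal) \<Rightarrow> ('a \<Rightarrow> real) \<Rightarrow> ennreal" where
  "marcinkiewicz_norm M \<phi> N0 N1 f =
     (SUP p \<in> {0<..} \<times> {0<..}. K_functional M N0 N1 (fst p) (snd p) f / ennreal (dual_P \<phi> (fst p) (snd p)))"

end

theory Submission
  imports Defs
begin

text \<open>
  Let \<open>a\<close> and \<open>b\<close> be the norms of the indicator of a set \<open>E\<close> of measure \<open>t\<close> in the two ri spaces.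
  Splitting the indicator as itself plus zero (or zero plus itself) bounds its K-functional by
  \<open>min (s0 * a) (s1 * b)\<close>, and homogeneity and monotonicity of \<open>\<phi>\<close> turn this into
  the upper bound \<open>\<phi> a b\<close> for its Marcinkiewicz norm.  For the lower bound it suffices that
  \<open>K (1/a, 1/b)\<close> of the indicator is at least \<open>1\<close>, which follows from the averaging inequality
  \<open>(\<integral>\<^sub>E \<bar>f\<bar>) \<parallel>\<chi>\<^sub>E\<parallel> \<le> t \<parallel>f\<parallel>\<close> in each ri space.

  The averaging inequality is shown for finitely valued \<open>f\<close> and extended by monotone
  convergence.  Cut \<open>E\<close> into \<open>n\<close> pieces of equal measure on which \<open>f\<close> is bounded below by
  constants \<open>c\<^sub>i\<close>: the \<open>n\<close> cyclic shifts of the step function \<open>\<Sum> c\<^sub>i \<chi>\<^sub>P\<^sub>i\<close> are equimeasurable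
  with it, hence all have norm at most \<open>\<parallel>f\<parallel>\<close>, and they add up to \<open>(\<Sum> c\<^sub>i) \<chi>\<^sub>E\<close>.
  In the atomic case the pieces are the atoms in \<open>E\<close>, on which \<open>f\<close> is constant.  In the
  non-atomic case Sierpinski's theorem lets the pieces follow the decreasing rearrangement of \<open>f\<close>,
  and the integral of \<open>f\<close> exceeds \<open>t/n \<Sum> c\<^sub>i\<close> by at most one slice \<open>t/n \<cdot> max f\<close>.
\<close>

section \<open>Banach function norms and ri spaces\<close>

lemma banach_function_norm_zero_iff:
  assumes "banach_function_norm M N" "f \<in> borel_measurable M"
  shows "N f = 0 \<longleftrightarrow> (AE x in M. f x = 0)"
  using assms unfolding banach_function_norm_def by blast

lemma banach_function_norm_cmult:
  assumes "banach_function_norm M N" "f \<in> borel_measurable M"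
  shows "N (\<lambda>x. c * f x) = ennreal \<bar>c\<bar> * N f"
  using assms unfolding banach_function_norm_def by blast

lemma banach_function_norm_triangle:
  assumes "banach_function_norm M N" "f \<in> borel_measurable M" "g \<in> borel_measurable M"
  shows "N (\<lambda>x. f x + g x) \<le> N f + N g"
  using assms unfolding banach_function_norm_def by blast

lemma banach_function_norm_mono:
  assumes "banach_function_norm M N" "f \<in> borel_measurable M" "g \<in> borel_measurable M"
    and "AE x in M. \<bar>g x\<bar> \<le> \<bar>f x\<bar>"
  shows "N g \<le> N f"
  using assms unfolding banach_function_norm_def by blast

lemma banach_function_norm_indicator_finite:
  assumes "banach_function_norm M N" "E \<in> sets M" "emeasure M E < \<infinity>"
  shows "N (indicator E) < \<infinity>"
  using assms unfolding banach_function_norm_def by blast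

lemma banach_function_norm_zero:
  assumes "banach_function_norm M N"
  shows "N (\<lambda>x. 0) = 0"
  using banach_function_norm_zero_iff[OF assms, of "\<lambda>x. 0"] by simp

lemma banach_function_norm_sum:
  assumes "banach_function_norm M N" "finite K" "\<And>k. k \<in> K \<Longrightarrow> f k \<in> borel_measurable M"
  shows "N (\<lambda>x. \<Sum>k\<in>K. f k x) \<le> (\<Sum>k\<in>K. N (f k))"
  using assms(2,3)
proof (induction K rule: finite_induct)
  case empty
  then show ?case using banach_function_norm_zero[OF assms(1)] by simp
next
  case (insert k K)
  have "N (\<lambda>x. \<Sum>k\<in>insert k K. f k x) = N (\<lambda>x. f k x + (\<Sum>k\<in>K. f k x))"
    using insert by simp
  also have "\<dots> \<le> N (f k) + N (\<lambda>x. \<Sum>k\<in>K. f k x)"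
    using insert by (intro banach_function_norm_triangle[OF assms(1)]) auto
  also have "\<dots> \<le> N (f k) + (\<Sum>k\<in>K. N (f k))"
    using insert by (intro add_left_mono) auto
  finally show ?case using insert by simp
qed

lemma banach_function_norm_indicator_pos:
  assumes "banach_function_norm M N" "E \<in> sets M" "emeasure M E > 0"
  shows "N (indicator E :: 'a \<Rightarrow> real) > 0"
proof (rule ccontr)
  assume "\<not> ?thesis"
  then have "AE x in M. (indicator E x :: real) = 0"
    using banach_function_norm_zero_iff[OF assms(1), of "indicator E"] assms(2) by simp
  then have "AE x in M. x \<notin> E" by (auto simp: indicator_def split: if_splits)
  then have "E \<in> null_sets M" using assms(2) by (simp add: AE_iff_null_sets)
  then show False using assms(3) by auto
qed

lemma ri_space_banach_function_norm: "ri_space M N \<Longrightarrow> banach_function_norm M N"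
  unfolding ri_space_def by simp

lemma ri_space_indicator_eq:
  assumes "ri_space M N" "E \<in> sets M" "E' \<in> sets M" "emeasure M E = emeasure M E'"
  shows "N (indicator E :: 'a \<Rightarrow> real) = N (indicator E')"
proof -
  have superlevel: "{x\<in>space M. s < \<bar>indicator A x :: real\<bar>} =
      (if s < 0 then space M else if s < 1 then A else {})" if "A \<in> sets M" for A s
    using sets.sets_into_space[OF that] by (auto simp: indicator_def)
  have "equimeasurable M (indicator E :: 'a \<Rightarrow> real) (indicator E')"
    unfolding equimeasurable_def superlevel[OF assms(2)] superlevel[OF assms(3)]
    using assms(4) by simp
  then show ?thesis using assms(1-3) unfolding ri_space_def by auto
qed

section \<open>Cyclic averages of step functions\<close>

lemma bij_betw_add_mod:
  assumes "(j::nat) < n"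
  shows "bij_betw (\<lambda>k. (k + j) mod n) {..<n} {..<n}"
proof (rule bij_betw_byWitness[where f'="\<lambda>k. (k + (n - j)) mod n"])
  have inverse: "((k + i) mod n + (n - i)) mod n = k" if "i \<le> n" "k < n" for i k
  proof -
    have "((k + i) mod n + (n - i)) mod n = (k + i + (n - i)) mod n" by (simp add: mod_add_left_eq)
    also have "k + i + (n - i) = k + n" using that by simp
    finally show ?thesis using that by simp
  qed
  then show "\<forall>k\<in>{..<n}. ((k + j) mod n + (n - j)) mod n = k"
    and "\<forall>k\<in>{..<n}. ((k + (n - j)) mod n + j) mod n = k"
    using assms inverse[of j] inverse[of "n - j"] by auto
qed (use assms in auto)

lemma sum_add_mod:
  assumes "(j::nat) < n"
  shows "(\<Sum>k<n. c ((k + j) mod n)) = (\<Sum>k<n. c k)"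
  using sum.reindex_bij_betw[OF bij_betw_add_mod[OF assms]] .

lemma step_function_eq:
  fixes d :: "nat \<Rightarrow> 'b::semiring_1"
  assumes "disjoint_family_on P {..<n}" "j < n" "x \<in> P j"
  shows "(\<Sum>i<n. d i * indicator (P i) x) = d j"
  using sum_indicator_disjoint_family[OF assms(1,3)] assms(2) by simp

lemma step_function_outside:
  fixes d :: "nat \<Rightarrow> 'b::semiring_1"
  assumes "\<And>i. i < n \<Longrightarrow> x \<notin> P i"
  shows "(\<Sum>i<n. d i * indicator (P i) x) = 0"
  using assms by (intro sum.neutral) auto

lemma step_function_superlevel_set:
  fixes d :: "nat \<Rightarrow> real"
  assumes P: "\<And>i. i < n \<Longrightarrow> P i \<subseteq> space M" "disjoint_family_on P {..<n}"
    and d: "\<And>i. i < n \<Longrightarrow> 0 \<le> d i" and s: "0 \<le> s"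
  shows "{x\<in>space M. s < \<bar>\<Sum>i<n. d i * indicator (P i) x\<bar>} = (\<Union>i\<in>{i\<in>{..<n}. s < d i}. P i)"
proof (intro set_eqI)
  fix x
  show "x \<in> {x\<in>space M. s < \<bar>\<Sum>i<n. d i * indicator (P i) x\<bar>} \<longleftrightarrow> x \<in> (\<Union>i\<in>{i\<in>{..<n}. s < d i}. P i)"
  proof (cases "\<exists>j<n. x \<in> P j")
    case True
    then obtain j where j: "j < n" "x \<in> P j" by blast
    have "x \<in> P i \<longleftrightarrow> i = j" if "i < n" for i
      using P(2) j that unfolding disjoint_family_on_def by blast
    then show ?thesis using step_function_eq[OF P(2) j, of d] P(1) j d[OF j(1)] by auto
  next
    case False
    then have "(\<Sum>i<n. d i * indicator (P i) x) = 0" by (intro step_function_outside) auto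
    with s have "\<not> s < \<bar>\<Sum>i<n. d i * indicator (P i) x\<bar>" by linarith
    with False show ?thesis by blast
  qed
qed

lemma equimeasurable_step_function_permute:
  fixes c :: "nat \<Rightarrow> real"
  assumes P: "\<And>i. i < n \<Longrightarrow> P i \<in> sets M" "disjoint_family_on P {..<n}"
    and a: "\<And>i. i < n \<Longrightarrow> emeasure M (P i) = a"
    and c: "\<And>i. i < n \<Longrightarrow> 0 \<le> c i"
    and \<sigma>: "bij_betw \<sigma> {..<n} {..<n}"
  shows "equimeasurable M (\<lambda>x. \<Sum>i<n. c (\<sigma> i) * indicator (P i) x) (\<lambda>x. \<Sum>i<n. c i * indicator (P i) x)"
  unfolding equimeasurable_def
proof
  fix s :: real
  have superlevel_measure: "emeasure M {x\<in>space M. s < \<bar>\<Sum>i<n. d i * indicator (P i) x\<bar>} =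
      (if s < 0 then emeasure M (space M) else (\<Sum>i<n. if s < d i then a else 0))"
    if d: "\<And>i. i < n \<Longrightarrow> 0 \<le> d i" for d
  proof (cases "s < 0")
    case False
    have "emeasure M (\<Union>i\<in>{i\<in>{..<n}. s < d i}. P i) = (\<Sum>i\<in>{i\<in>{..<n}. s < d i}. emeasure M (P i))"
      using P by (intro sum_emeasure[symmetric]) (auto simp: disjoint_family_on_def)
    also have "\<dots> = (\<Sum>i<n. if s < d i then emeasure M (P i) else 0)"
      by (rule sum.inter_filter) simp
    also have "\<dots> = (\<Sum>i<n. if s < d i then a else 0)"
      using a by (intro sum.cong) auto
    finally show ?thesis
      using False P d by (subst step_function_superlevel_set) (auto dest: sets.sets_into_space)
  qed (auto intro: arg_cong[where f = "emeasure M"])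
  have "(\<Sum>i<n. if s < c (\<sigma> i) then a else 0) = (\<Sum>i<n. if s < c i then a else 0)"
    using sum.reindex_bij_betw[OF \<sigma>, of "\<lambda>i. if s < c i then a else 0"] .
  moreover have "0 \<le> c (\<sigma> i)" if "i < n" for i
    using c \<sigma> that unfolding bij_betw_def by auto
  ultimately show "emeasure M {x\<in>space M. s < \<bar>\<Sum>i<n. c (\<sigma> i) * indicator (P i) x\<bar>} =
      emeasure M {x\<in>space M. s < \<bar>\<Sum>i<n. c i * indicator (P i) x\<bar>}"
    using superlevel_measure[of "\<lambda>i. c (\<sigma> i)"] superlevel_measure[of c] c by simp
qed

lemma ri_space_cyclic_average:
  fixes c :: "nat \<Rightarrow> real" and h :: "'a \<Rightarrow> real"
  assumes ri: "ri_space M N"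
    and P: "\<And>i. i < n \<Longrightarrow> P i \<in> sets M" "disjoint_family_on P {..<n}"
    and a: "\<And>i. i < n \<Longrightarrow> emeasure M (P i) = a"
    and c: "\<And>i. i < n \<Longrightarrow> 0 \<le> c i"
    and h: "h \<in> borel_measurable M"
    and minorant: "AE x in M. \<forall>i<n. x \<in> P i \<longrightarrow> c i \<le> h x"
  shows "ennreal (\<Sum>i<n. c i) * N (indicator (\<Union>i<n. P i)) \<le> of_nat n * N h"
proof -
  have bfn: "banach_function_norm M N" using ri by (rule ri_space_banach_function_norm)
  define g where "g k x = (\<Sum>i<n. c ((i + k) mod n) * indicator (P i) x)" for k x
  have g_measurable: "g k \<in> borel_measurable M" for k
    unfolding g_def using P(1) by measurable
  have g_0: "g 0 = (\<lambda>x. \<Sum>i<n. c i * indicator (P i) x)"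
    unfolding g_def by (intro ext sum.cong) auto
  have norm_g: "N (g k) = N (g 0)" if "k < n" for k
  proof -
    have "equimeasurable M (g k) (g 0)"
      unfolding g_def g_0[unfolded g_def]
      using equimeasurable_step_function_permute[OF P a c bij_betw_add_mod[OF that]] .
    then show ?thesis using ri g_measurable unfolding ri_space_def by blast
  qed
  \<comment> \<open>Summing all cyclic shifts of the step function spreads every value over every piece.\<close>
  have sum_g: "(\<lambda>x. \<Sum>k<n. g k x) = (\<lambda>x. (\<Sum>i<n. c i) * indicator (\<Union>i<n. P i) x)"
  proof
    fix x
    have "(\<Sum>k<n. g k x) = (\<Sum>i<n. (\<Sum>k<n. c ((k + i) mod n)) * indicator (P i) x)"
      unfolding g_def by (subst sum.swap) (simp add: sum_distrib_right add.commute)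
    also have "\<dots> = (\<Sum>i<n. (\<Sum>k<n. c k) * indicator (P i) x)"
      by (intro sum.cong refl) (simp add: sum_add_mod)
    also have "\<dots> = (\<Sum>i<n. c i) * indicator (\<Union>i<n. P i) x"
      using P(2) by (simp add: sum_distrib_left[symmetric] indicator_UN_disjoint)
    finally show "(\<Sum>k<n. g k x) = (\<Sum>i<n. c i) * indicator (\<Union>i<n. P i) x" .
  qed
  have g_0_le: "N (g 0) \<le> N h"
  proof (rule banach_function_norm_mono[OF bfn h g_measurable])
    show "AE x in M. \<bar>g 0 x\<bar> \<le> \<bar>h x\<bar>"
      using minorant
    proof eventually_elim
      case (elim x)
      show ?case
      proof (cases "\<exists>j<n. x \<in> P j")
        case True
        then obtain j where j: "j < n" "x \<in> P j" by blast
        then have "c j \<le> h x" using elim by blast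
        then show ?thesis using c[OF j(1)] step_function_eq[OF P(2) j, of c] by (simp add: g_0)
      next
        case False
        then have "g 0 x = 0" unfolding g_0 by (intro step_function_outside) auto
        then show ?thesis by simp
      qed
    qed
  qed
  have "0 \<le> (\<Sum>i<n. c i)" using c by (intro sum_nonneg) auto
  then have "ennreal (\<Sum>i<n. c i) * N (indicator (\<Union>i<n. P i)) = N (\<lambda>x. (\<Sum>i<n. c i) * indicator (\<Union>i<n. P i) x)"
    using P(1) banach_function_norm_cmult[OF bfn, of "indicator (\<Union>i<n. P i)" "\<Sum>i<n. c i"] by auto
  also have "\<dots> = N (\<lambda>x. \<Sum>k<n. g k x)"
    by (simp only: sum_g)
  also have "\<dots> \<le> (\<Sum>k<n. N (g k))"
    using g_measurable by (intro banach_function_norm_sum[OF bfn]) auto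
  also have "\<dots> = (\<Sum>k<n. N (g 0))"
    by (intro sum.cong refl norm_g) simp
  also have "\<dots> = of_nat n * N (g 0)"
    by simp
  also have "\<dots> \<le> of_nat n * N h"
    using g_0_le by (intro mult_left_mono) auto
  finally show ?thesis .
qed

lemma nn_integral_step_function:
  assumes "\<And>i. i \<in> I \<Longrightarrow> P i \<in> sets M"
  shows "(\<integral>\<^sup>+x. (\<Sum>i\<in>I. ennreal (b i) * indicator (P i) x) \<partial>M) = (\<Sum>i\<in>I. ennreal (b i) * emeasure M (P i))"
proof -
  have "(\<integral>\<^sup>+x. (\<Sum>i\<in>I. ennreal (b i) * indicator (P i) x) \<partial>M) = (\<Sum>i\<in>I. \<integral>\<^sup>+x. ennreal (b i) * indicator (P i) x \<partial>M)"
    using assms by (intro nn_integral_sum) auto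
  also have "\<dots> = (\<Sum>i\<in>I. ennreal (b i) * emeasure M (P i))"
    using assms by (intro sum.cong refl nn_integral_cmult_indicator)
  finally show ?thesis .
qed

section \<open>The Marcinkiewicz norm of an indicator\<close>

lemma K_functional_le_left:
  assumes "banach_function_norm M N1" "f \<in> borel_measurable M" "N0 f < \<infinity>"
  shows "K_functional M N0 N1 s0 s1 f \<le> ennreal s0 * N0 f"
proof -
  have "(f, \<lambda>x. 0) \<in> {(f0, f1). f0 \<in> borel_measurable M \<and> f1 \<in> borel_measurable M \<and>
      N0 f0 < \<infinity> \<and> N1 f1 < \<infinity> \<and> (\<forall>x\<in>space M. f x = f0 x + f1 x)}"
    using assms banach_function_norm_zero[OF assms(1)] by auto
  then show ?thesis
    unfolding K_functional_def by (rule INF_lower2) (simp add: banach_function_norm_zero[OF assms(1)])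
qed

lemma K_functional_le_right:
  assumes "banach_function_norm M N0" "f \<in> borel_measurable M" "N1 f < \<infinity>"
  shows "K_functional M N0 N1 s0 s1 f \<le> ennreal s1 * N1 f"
proof -
  have "(\<lambda>x. 0, f) \<in> {(f0, f1). f0 \<in> borel_measurable M \<and> f1 \<in> borel_measurable M \<and>
      N0 f0 < \<infinity> \<and> N1 f1 < \<infinity> \<and> (\<forall>x\<in>space M. f x = f0 x + f1 x)}"
    using assms banach_function_norm_zero[OF assms(1)] by auto
  then show ?thesis
    unfolding K_functional_def by (rule INF_lower2) (simp add: banach_function_norm_zero[OF assms(1)])
qed

lemma class_P_homogeneous:
  "class_P \<phi> \<Longrightarrow> 0 < l \<Longrightarrow> 0 \<le> a \<Longrightarrow> 0 \<le> b \<Longrightarrow> \<phi> (l * a) (l * b) = l * \<phi> a b"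
  by (simp add: class_P_def)

lemma class_P_mono:
  "class_P \<phi> \<Longrightarrow> 0 \<le> a \<Longrightarrow> a \<le> a' \<Longrightarrow> 0 \<le> b \<Longrightarrow> b \<le> b' \<Longrightarrow> \<phi> a b \<le> \<phi> a' b'"
  by (simp add: class_P_def)

lemma class_P_pos:
  assumes "class_P \<phi>" "0 < a" "0 < b"
  shows "0 < \<phi> a b"
proof -
  have "0 \<le> \<phi> a b" "\<phi> a b \<noteq> 0"
    using assms by (simp_all add: class_P_def)
  then show ?thesis by simp
qed

lemma class_P_min_mult_le:
  assumes P: "class_P \<phi>" and s: "0 < s0" "0 < s1" and ab: "0 < a" "0 < b"
  shows "min (s0 * a) (s1 * b) * \<phi> (1 / s0) (1 / s1) \<le> \<phi> a b"
proof -
  let ?m = "min (s0 * a) (s1 * b)"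
  have "0 < ?m" using s ab by simp
  have "?m / s0 \<le> a" "?m / s1 \<le> b"
    using s by (simp_all add: divide_le_eq mult.commute)
  have "?m * \<phi> (1 / s0) (1 / s1) = \<phi> (?m / s0) (?m / s1)"
    using class_P_homogeneous[OF P \<open>0 < ?m\<close>, of "1 / s0" "1 / s1"] s by simp
  also have "\<dots> \<le> \<phi> a b"
    using \<open>0 < ?m\<close> \<open>?m / s0 \<le> a\<close> \<open>?m / s1 \<le> b\<close> s by (intro class_P_mono[OF P]) auto
  finally show ?thesis .
qed

lemma marcinkiewicz_norm_indicator_le:
  assumes bfn0: "banach_function_norm M N0" and bfn1: "banach_function_norm M N1" and P: "class_P \<phi>"
    and E: "E \<in> sets M"
    and a: "N0 (indicator E) = ennreal a" "0 < a" and b: "N1 (indicator E) = ennreal b" "0 < b"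
  shows "marcinkiewicz_norm M \<phi> N0 N1 (indicator E) \<le> ennreal (\<phi> a b)"
  unfolding marcinkiewicz_norm_def
proof (rule SUP_least)
  fix p :: "real \<times> real" assume "p \<in> {0<..} \<times> {0<..}"
  then obtain s0 s1 where p: "p = (s0, s1)" and s: "0 < s0" "0 < s1" by auto
  have q: "0 < \<phi> (1 / s0) (1 / s1)"
    using s by (intro class_P_pos[OF P]) auto
  have "K_functional M N0 N1 s0 s1 (indicator E) \<le> ennreal (min (s0 * a) (s1 * b))"
    using K_functional_le_left[OF bfn1, of "indicator E" N0 s0 s1] K_functional_le_right[OF bfn0, of "indicator E" N1 s0 s1]
      E a b s by (auto simp: min_def ennreal_mult)
  then have "K_functional M N0 N1 s0 s1 (indicator E) / ennreal (dual_P \<phi> s0 s1)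
      \<le> ennreal (min (s0 * a) (s1 * b)) / ennreal (1 / \<phi> (1 / s0) (1 / s1))"
    unfolding dual_P_def by (rule divide_right_mono_ennreal)
  also have "\<dots> = ennreal (min (s0 * a) (s1 * b) * \<phi> (1 / s0) (1 / s1))"
    using q s a b by (subst divide_ennreal) auto
  also have "\<dots> \<le> ennreal (\<phi> a b)"
    using class_P_min_mult_le[OF P _ _ a(2) b(2), of s0 s1] s by (intro ennreal_leI) auto
  finally show "K_functional M N0 N1 (fst p) (snd p) (indicator E) / ennreal (dual_P \<phi> (fst p) (snd p))
      \<le> ennreal (\<phi> a b)"
    unfolding p by simp
qed

lemma marcinkiewicz_norm_indicator_ge:
  assumes P: "class_P \<phi>" and a: "0 < a" and b: "0 < b"
    and K: "1 \<le> K_functional M N0 N1 (1 / a) (1 / b) (indicator E)"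
  shows "ennreal (\<phi> a b) \<le> marcinkiewicz_norm M \<phi> N0 N1 (indicator E)"
proof -
  have "ennreal (\<phi> a b) = 1 / ennreal (dual_P \<phi> (1 / a) (1 / b))"
    using class_P_pos[OF P a b] unfolding dual_P_def by (simp add: divide_ennreal[symmetric])
  also have "\<dots> \<le> K_functional M N0 N1 (1 / a) (1 / b) (indicator E) / ennreal (dual_P \<phi> (1 / a) (1 / b))"
    using K by (rule divide_right_mono_ennreal)
  also have "\<dots> \<le> marcinkiewicz_norm M \<phi> N0 N1 (indicator E)"
    unfolding marcinkiewicz_norm_def using a b by (intro SUP_upper2[of "(1 / a, 1 / b)"]) auto
  finally show ?thesis .
qed

section \<open>The averaging inequality\<close>

text \<open>
  For finitely valued \<open>h \<ge> 0\<close>, \<open>upper_quantile M E h\<close> is the left-continuous decreasing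
  rearrangement of \<open>h\<close> on \<open>E\<close>, and an \<open>upper_level_set\<close> of measure \<open>r\<close> consists of the points
  of \<open>E\<close> where \<open>h\<close> is largest, ties at the threshold being split arbitrarily.
\<close>

definition upper_quantile :: "'a measure \<Rightarrow> 'a set \<Rightarrow> ('a \<Rightarrow> real) \<Rightarrow> real \<Rightarrow> real" where
  "upper_quantile M E h r = Max {v \<in> insert 0 (h ` space M). r \<le> measure M {x\<in>E. v \<le> h x}}"

definition upper_level_set :: "'a measure \<Rightarrow> 'a set \<Rightarrow> ('a \<Rightarrow> real) \<Rightarrow> real \<Rightarrow> 'a set \<Rightarrow> bool" where
  "upper_level_set M E h r S \<longleftrightarrow> S \<in> sets M \<and> measure M S = r \<and>
     {x\<in>E. upper_quantile M E h r < h x} \<subseteq> S \<and> S \<subseteq> {x\<in>E. upper_quantile M E h r \<le> h x}"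

context finite_measure
begin

lemma ri_space_step_minorant_le:
  fixes N :: "('a \<Rightarrow> real) \<Rightarrow> ennreal" and c :: "nat \<Rightarrow> real" and h :: "'a \<Rightarrow> real"
  assumes ri: "ri_space M N" and n: "0 < n" and E: "E \<in> sets M"
    and P: "\<And>i. i < n \<Longrightarrow> P i \<in> sets M" "disjoint_family_on P {..<n}"
    and measure_P: "\<And>i. i < n \<Longrightarrow> measure M (P i) = measure M E / n"
    and c: "\<And>i. i < n \<Longrightarrow> 0 \<le> c i"
    and h: "h \<in> borel_measurable M"
    and minorant: "AE x in M. \<forall>i<n. x \<in> P i \<longrightarrow> c i \<le> h x"
  shows "ennreal (measure M E / n * (\<Sum>i<n. c i)) * N (indicator E) \<le> measure M E * N h"
proof -
  have n_pieces: "of_nat n * ennreal (measure M E / n) = measure M E"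
    using n by (simp add: ennreal_of_nat_eq_real_of_nat ennreal_mult[symmetric])
  have emeasure_P: "emeasure M (P i) = measure M E / n" if "i < n" for i
    using measure_P[OF that] by (simp add: emeasure_eq_measure)
  have union_sets: "(\<Union>i<n. P i) \<in> sets M" using P(1) by auto
  have "emeasure M (\<Union>i<n. P i) = (\<Sum>i<n. emeasure M (P i))"
    using P by (intro sum_emeasure[symmetric]) auto
  also have "\<dots> = emeasure M E"
    using emeasure_P n_pieces by (simp add: emeasure_eq_measure)
  finally have norm_union: "N (indicator (\<Union>i<n. P i)) = N (indicator E)"
    by (rule ri_space_indicator_eq[OF ri union_sets E])
  have sum_c: "0 \<le> (\<Sum>i<n. c i)" using c by (intro sum_nonneg) auto
  have "ennreal (measure M E / n * (\<Sum>i<n. c i)) * N (indicator E)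
      = ennreal (measure M E / n) * (ennreal (\<Sum>i<n. c i) * N (indicator (\<Union>i<n. P i)))"
    using ennreal_mult[of "measure M E / n" "\<Sum>i<n. c i"] sum_c by (simp add: norm_union mult.assoc)
  also have "\<dots> \<le> ennreal (measure M E / n) * (of_nat n * N h)"
    using ri_space_cyclic_average[OF ri P emeasure_P c h minorant] by (rule mult_left_mono[OF _ zero_le])
  also have "\<dots> = measure M E * N h"
    using n_pieces by (simp add: mult.assoc[symmetric] mult.commute[of "ennreal (measure M E / n)"])
  finally show ?thesis .
qed

lemma nonatomic_small_subset:
  assumes na: "nonatomic M" and A: "A \<in> sets M" "0 < measure M A" and e: "0 < e"
  shows "\<exists>B\<in>sets M. B \<subseteq> A \<and> 0 < measure M B \<and> measure M B < e"
proof -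
  have halving: "\<exists>B\<in>sets M. B \<subseteq> A \<and> 0 < measure M B \<and> measure M B \<le> measure M A / 2 ^ k" for k
  proof (induction k)
    case 0
    then show ?case using A by auto
  next
    case (Suc k)
    then obtain B where B: "B \<in> sets M" "B \<subseteq> A" "0 < measure M B" "measure M B \<le> measure M A / 2 ^ k"
      by blast
    then obtain C where C: "C \<in> sets M" "C \<subseteq> B" "0 < measure M C" "measure M C < measure M B"
      using na unfolding nonatomic_def by blast
    have diff: "measure M (B - C) = measure M B - measure M C"
      using B C by (intro finite_measure_Diff) auto
    have bound: "measure M B / 2 \<le> measure M A / 2 ^ Suc k"
      using B(4) by simp
    show ?case
    proof (cases "measure M C \<le> measure M B / 2")
      case True
      then have "measure M C \<le> measure M A / 2 ^ Suc k" using bound by linarith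
      then show ?thesis using B C by blast
    next
      case False
      then have "measure M (B - C) \<le> measure M A / 2 ^ Suc k" "0 < measure M (B - C)"
        using bound diff C(4) by linarith+
      moreover have "B - C \<in> sets M" using B C by auto
      ultimately show ?thesis using B by blast
    qed
  qed
  obtain k :: nat where "measure M A / e < 2 ^ k"
    using real_arch_pow[of 2 "measure M A / e"] by auto
  then have "measure M A / 2 ^ k < e"
    using e by (simp add: divide_less_eq mult.commute)
  moreover obtain B where "B \<in> sets M" "B \<subseteq> A" "0 < measure M B" "measure M B \<le> measure M A / 2 ^ k"
    using halving by blast
  ultimately show ?thesis by (intro bexI[of _ B]) auto
qed

lemma nonatomic_subset_measure_eq:
  assumes na: "nonatomic M" and B: "B \<in> sets M" and r: "0 \<le> r" "r \<le> measure M B"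
  shows "\<exists>C\<in>sets M. C \<subseteq> B \<and> measure M C = r"
proof -
  define room where "room C = {measure M D | D. D \<in> sets M \<and> D \<subseteq> B - C \<and> measure M C + measure M D \<le> r}" for C
  have bdd: "bdd_above (room C)" for C
    unfolding room_def by (rule bdd_aboveI[of _ "measure M (space M)"]) (auto intro: bounded_measure)
  \<comment> \<open>Greedy step: add a set filling at least half of the room that is left below \<open>r\<close>.\<close>
  have "\<exists>D. C \<in> sets M \<and> measure M C \<le> r \<longrightarrow>
      D \<in> sets M \<and> D \<subseteq> B - C \<and> measure M C + measure M D \<le> r \<and> Sup (room C) / 2 \<le> measure M D" for C
  proof (cases "Sup (room C) \<le> 0")
    case False
    moreover have "room C \<noteq> {}" if "C \<in> sets M" "measure M C \<le> r"
      unfolding room_def using that by (auto intro!: exI[of _ "{}"])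
    ultimately show ?thesis
      using less_cSup_iff[OF _ bdd, of C "Sup (room C) / 2"] unfolding room_def by force
  qed (auto intro!: exI[of _ "{}"])
  then obtain D where D: "\<And>C. C \<in> sets M \<Longrightarrow> measure M C \<le> r \<Longrightarrow>
      D C \<in> sets M \<and> D C \<subseteq> B - C \<and> measure M C + measure M (D C) \<le> r \<and> Sup (room C) / 2 \<le> measure M (D C)"
    by metis
  define Cs where "Cs k = ((\<lambda>C. C \<union> D C) ^^ k) {}" for k
  have Cs_Suc: "Cs (Suc k) = Cs k \<union> D (Cs k)" for k
    by (simp add: Cs_def)
  have Cs: "Cs k \<in> sets M \<and> Cs k \<subseteq> B \<and> measure M (Cs k) \<le> r" for k
  proof (induction k)
    case (Suc k)
    then have "D (Cs k) \<in> sets M" "D (Cs k) \<subseteq> B - Cs k" "measure M (Cs k) + measure M (D (Cs k)) \<le> r"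
      using D[of "Cs k"] by auto
    moreover have "measure M (Cs k \<union> D (Cs k)) = measure M (Cs k) + measure M (D (Cs k))"
      using calculation Suc by (intro finite_measure_Union) auto
    ultimately show ?case using Suc unfolding Cs_Suc by auto
  qed (use r in \<open>simp add: Cs_def\<close>)
  have measure_Cs_Suc: "measure M (Cs (Suc k)) = measure M (Cs k) + measure M (D (Cs k))" for k
    using D[of "Cs k"] Cs[of k] unfolding Cs_Suc by (intro finite_measure_Union) auto
  define C where "C = (\<Union>k. Cs k)"
  have C: "C \<in> sets M" "C \<subseteq> B" using Cs unfolding C_def by auto
  have "(\<lambda>k. measure M (Cs k)) \<longlonglongrightarrow> measure M C"
    unfolding C_def using Cs Cs_Suc by (intro finite_Lim_measure_incseq incseq_SucI) auto
  then have "measure M C \<le> r"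
    by (rule LIMSEQ_le_const2) (use Cs in auto)
  moreover have "\<not> measure M C < r"
  proof
    assume "measure M C < r"
    moreover have "measure M (B - C) = measure M B - measure M C"
      using B C by (intro finite_measure_Diff) auto
    ultimately obtain D0 where D0: "D0 \<in> sets M" "D0 \<subseteq> B - C" "0 < measure M D0" "measure M D0 < r - measure M C"
      using nonatomic_small_subset[OF na, of "B - C" "r - measure M C"] B C r by auto
    \<comment> \<open>\<open>D0\<close> always fits into the room left, so every greedy step adds at least \<open>measure M D0 / 2\<close>.\<close>
    have D0_room: "measure M D0 \<le> Sup (room (Cs k))" for k
    proof (rule cSup_upper[OF _ bdd])
      have "measure M (Cs k) \<le> measure M C"
        using C Cs unfolding C_def by (intro finite_measure_mono) auto
      then show "measure M D0 \<in> room (Cs k)"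
        unfolding room_def using D0 by (intro CollectI exI[of _ D0]) (auto simp: C_def)
    qed
    have step: "measure M D0 / 2 \<le> measure M (D (Cs k))" for k
    proof -
      have "Sup (room (Cs k)) / 2 \<le> measure M (D (Cs k))" using D[of "Cs k"] Cs[of k] by blast
      then show ?thesis using D0_room[of k] by linarith
    qed
    have growth: "real k * (measure M D0 / 2) \<le> measure M (Cs k)" for k
    proof (induction k)
      case (Suc k)
      have "real (Suc k) * (measure M D0 / 2) = real k * (measure M D0 / 2) + measure M D0 / 2"
        by (simp add: algebra_simps)
      then show ?case using Suc.IH step[of k] unfolding measure_Cs_Suc by linarith
    qed (simp add: Cs_def)
    obtain k :: nat where "r / (measure M D0 / 2) < real k"
      using reals_Archimedean2 by blast
    then have "r < real k * (measure M D0 / 2)"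
      using D0(3) by (simp add: divide_less_eq)
    then show False
      using growth[of k] Cs[of k] by linarith
  qed
  ultimately show ?thesis using C by auto
qed

lemma nonatomic_between_measure_eq:
  assumes na: "nonatomic M" and A: "A \<in> sets M" and B: "B \<in> sets M" "A \<subseteq> B"
    and r: "measure M A \<le> r" "r \<le> measure M B"
  shows "\<exists>C\<in>sets M. A \<subseteq> C \<and> C \<subseteq> B \<and> measure M C = r"
proof -
  have "measure M (B - A) = measure M B - measure M A"
    using A B by (intro finite_measure_Diff) auto
  then obtain C where C: "C \<in> sets M" "C \<subseteq> B - A" "measure M C = r - measure M A"
    using nonatomic_subset_measure_eq[OF na, of "B - A" "r - measure M A"] A B r by auto
  have "measure M (A \<union> C) = measure M A + measure M C"
    using A C by (intro finite_measure_Union) auto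
  then show ?thesis using A B C by (intro bexI[of _ "A \<union> C"]) auto
qed

context
  fixes E :: "'a set" and h :: "'a \<Rightarrow> real"
  assumes E: "E \<in> sets M" and h_measurable: "h \<in> borel_measurable M"
    and h_finite: "finite (h ` space M)" and h_nonneg: "\<And>x. x \<in> space M \<Longrightarrow> 0 \<le> h x"
begin

lemma sets_superlevel_restrict: "{x\<in>E. v \<le> h x} \<in> sets M" "{x\<in>E. v < h x} \<in> sets M"
proof -
  have "{x\<in>E. v \<le> h x} = {x\<in>space M. v \<le> h x} \<inter> E" "{x\<in>E. v < h x} = {x\<in>space M. v < h x} \<inter> E"
    using sets.sets_into_space[OF E] by auto
  then show "{x\<in>E. v \<le> h x} \<in> sets M" "{x\<in>E. v < h x} \<in> sets M"
    using h_measurable E by simp_all measurable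
qed

lemma upper_quantile_mem:
  assumes "r \<le> measure M E"
  shows "upper_quantile M E h r \<in> {v \<in> insert 0 (h ` space M). r \<le> measure M {x\<in>E. v \<le> h x}}"
proof -
  have "{x\<in>E. 0 \<le> h x} = E" using sets.sets_into_space[OF E] h_nonneg by auto
  then show ?thesis
    unfolding upper_quantile_def using assms h_finite by (intro Max_in) auto
qed

lemma upper_quantile_nonneg:
  assumes "r \<le> measure M E"
  shows "0 \<le> upper_quantile M E h r"
  using upper_quantile_mem[OF assms] h_nonneg by auto

lemma measure_upper_quantile_ge:
  assumes "r \<le> measure M E"
  shows "r \<le> measure M {x\<in>E. upper_quantile M E h r \<le> h x}"
  using upper_quantile_mem[OF assms] by simp

lemma upper_quantile_antimono:
  assumes "r \<le> r'" "r' \<le> measure M E"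
  shows "upper_quantile M E h r' \<le> upper_quantile M E h r"
  unfolding upper_quantile_def
proof (rule Max_mono)
  show "{v \<in> insert 0 (h ` space M). r' \<le> measure M {x\<in>E. v \<le> h x}} \<noteq> {}"
    using upper_quantile_mem[OF assms(2)] by blast
qed (use assms h_finite in auto)

lemma measure_above_upper_quantile_less:
  assumes "0 < r"
  shows "measure M {x\<in>E. upper_quantile M E h r < h x} < r"
proof (cases "{x\<in>E. upper_quantile M E h r < h x} = {}")
  case False
  define W where "W = {v \<in> h ` space M. upper_quantile M E h r < v}"
  have E_space: "E \<subseteq> space M" using sets.sets_into_space[OF E] .
  have "finite W" "W \<noteq> {}" unfolding W_def using h_finite False E_space by auto
  then have "Min W \<in> W" by (rule Min_in)
  \<comment> \<open>As \<open>h\<close> takes finitely many values, the points strictly above the quantile are those at or above the next value.\<close>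
  have above_eq: "{x\<in>E. upper_quantile M E h r < h x} = {x\<in>E. Min W \<le> h x}"
  proof (intro set_eqI iffI)
    fix x assume x: "x \<in> {x\<in>E. upper_quantile M E h r < h x}"
    then have "h x \<in> W" unfolding W_def using E_space by auto
    then show "x \<in> {x\<in>E. Min W \<le> h x}" using x \<open>finite W\<close> by auto
  next
    fix x assume "x \<in> {x\<in>E. Min W \<le> h x}"
    then show "x \<in> {x\<in>E. upper_quantile M E h r < h x}" using \<open>Min W \<in> W\<close> unfolding W_def by auto
  qed
  have "\<not> r \<le> measure M {x\<in>E. Min W \<le> h x}"
  proof
    assume "r \<le> measure M {x\<in>E. Min W \<le> h x}"
    then have "Min W \<le> upper_quantile M E h r"
      unfolding upper_quantile_def using \<open>Min W \<in> W\<close> h_finite unfolding W_def by (intro Max_ge) auto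
    then show False using \<open>Min W \<in> W\<close> unfolding W_def by auto
  qed
  then show ?thesis unfolding above_eq by simp
next
  case True
  then show ?thesis using assms by (simp only: measure_empty)
qed

lemma above_upper_quantile_zero: "{x\<in>E. upper_quantile M E h 0 < h x} = {}"
proof -
  have "h x \<le> upper_quantile M E h 0" if "x \<in> E" for x
    unfolding upper_quantile_def using h_finite sets.sets_into_space[OF E] that by (intro Max_ge) auto
  then show ?thesis by force
qed

lemma nonatomic_upper_level_set_extend:
  assumes na: "nonatomic M" and S: "upper_level_set M E h r S"
    and r: "r \<le> r'" "0 < r'" "r' \<le> measure M E"
  shows "\<exists>S'. S \<subseteq> S' \<and> upper_level_set M E h r' S'"
proof -
  define l where "l = upper_quantile M E h r'"
  have l_le: "l \<le> upper_quantile M E h r"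
    unfolding l_def using r by (intro upper_quantile_antimono) auto
  have S_sub: "S \<union> {x\<in>E. l < h x} \<subseteq> {x\<in>E. l \<le> h x}"
    using S l_le unfolding upper_level_set_def by force
  have "measure M (S \<union> {x\<in>E. l < h x}) \<le> r'"
  proof (cases "l = upper_quantile M E h r")
    case True
    then have "S \<union> {x\<in>E. l < h x} = S" using S unfolding upper_level_set_def by auto
    then show ?thesis using S r unfolding upper_level_set_def by simp
  next
    case False
    then have "S \<subseteq> {x\<in>E. l < h x}" using S l_le unfolding upper_level_set_def by force
    then have "S \<union> {x\<in>E. l < h x} = {x\<in>E. l < h x}" by blast
    then show ?thesis using measure_above_upper_quantile_less[OF r(2)] unfolding l_def by simp
  qed
  moreover have "r' \<le> measure M {x\<in>E. l \<le> h x}"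
    unfolding l_def using r(3) by (rule measure_upper_quantile_ge)
  moreover have "S \<union> {x\<in>E. l < h x} \<in> sets M"
    using S sets_superlevel_restrict unfolding upper_level_set_def by auto
  ultimately obtain S' where "S' \<in> sets M" "S \<union> {x\<in>E. l < h x} \<subseteq> S'" "S' \<subseteq> {x\<in>E. l \<le> h x}" "measure M S' = r'"
    using nonatomic_between_measure_eq[OF na _ sets_superlevel_restrict(1) S_sub] by blast
  then show ?thesis unfolding upper_level_set_def l_def by blast
qed

lemma nonatomic_upper_level_chain:
  fixes n :: nat
  assumes na: "nonatomic M" and E_pos: "0 < measure M E"
  shows "\<exists>S. incseq S \<and> S 0 = {} \<and> (\<forall>k\<le>n. upper_level_set M E h (real k * measure M E / n) (S k))"
proof -
  have "\<exists>S. incseq S \<and> S 0 = {} \<and> (\<forall>k\<le>m. upper_level_set M E h (real k * measure M E / n) (S k))"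
    if "m \<le> n" for m
    using that
  proof (induction m)
    case 0
    have "upper_level_set M E h 0 {}"
      unfolding upper_level_set_def using above_upper_quantile_zero by auto
    then show ?case by (intro exI[of _ "\<lambda>_. {}"]) (auto simp: incseq_def)
  next
    case (Suc m)
    then obtain S where S: "incseq S" "S 0 = {}"
      and S_level: "\<forall>k\<le>m. upper_level_set M E h (real k * measure M E / n) (S k)"
      by auto
    have "real m * measure M E / n \<le> real (Suc m) * measure M E / n"
      using E_pos by (simp add: divide_right_mono mult_right_mono)
    moreover have "0 < real (Suc m) * measure M E / n"
      using Suc.prems E_pos by simp
    moreover have "real (Suc m) * measure M E / n \<le> measure M E"
      using Suc.prems E_pos by (simp add: divide_le_eq mult_right_mono)
    ultimately obtain C where C: "S m \<subseteq> C" "upper_level_set M E h (real (Suc m) * measure M E / n) C"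
      using nonatomic_upper_level_set_extend[OF na] S_level by blast
    have "incseq (\<lambda>k. if k \<le> m then S k else C)"
    proof (rule incseq_SucI)
      fix k
      show "(if k \<le> m then S k else C) \<subseteq> (if Suc k \<le> m then S (Suc k) else C)"
        using incseq_SucD[OF S(1), of k] C(1) by (auto simp: not_less_eq_eq)
    qed
    then show ?case
      using S S_level C(2) by (intro exI[of _ "\<lambda>k. if k \<le> m then S k else C"]) (auto simp: le_Suc_eq)
  qed
  then show ?thesis by blast
qed

lemma nonatomic_upper_level_partition:
  fixes n :: nat
  assumes na: "nonatomic M" and E_pos: "0 < measure M E" and n: "0 < n"
  obtains P where "\<And>i. i < n \<Longrightarrow> P i \<in> sets M"
    and "\<And>i. i < n \<Longrightarrow> measure M (P i) = measure M E / n"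
    and "disjoint_family_on P {..<n}" and "E - (\<Union>i<n. P i) \<in> null_sets M"
    and "\<And>i x. i < n \<Longrightarrow> x \<in> P i \<Longrightarrow> upper_quantile M E h (real (Suc i) * measure M E / n) \<le> h x"
    and "\<And>i x. i < n \<Longrightarrow> x \<in> P i \<Longrightarrow> h x \<le> upper_quantile M E h (real i * measure M E / n)"
proof -
  obtain S where S: "incseq S" "S 0 = {}"
    and S_level: "\<forall>k\<le>n. upper_level_set M E h (real k * measure M E / n) (S k)"
    using nonatomic_upper_level_chain[OF na E_pos] by blast
  have S_sets: "S k \<in> sets M"
    and measure_S: "measure M (S k) = real k * measure M E / n"
    and S_above: "{x\<in>E. upper_quantile M E h (real k * measure M E / n) < h x} \<subseteq> S k"
    and S_below: "S k \<subseteq> {x\<in>E. upper_quantile M E h (real k * measure M E / n) \<le> h x}"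
    if "k \<le> n" for k
    using S_level that unfolding upper_level_set_def by blast+
  define P where "P i = S (Suc i) - S i" for i
  have P_sets: "P i \<in> sets M" if "i < n" for i
    using S_sets[of i] S_sets[OF Suc_leI[OF that]] that unfolding P_def by simp
  have P_E: "P i \<subseteq> E" if "i < n" for i
    using S_below[OF Suc_leI[OF that]] unfolding P_def by blast
  have measure_P: "measure M (P i) = measure M E / n" if "i < n" for i
  proof -
    have "measure M (P i) = real (Suc i) * measure M E / n - real i * measure M E / n"
      unfolding P_def using that S_sets[of i] S_sets[of "Suc i"] incseq_SucD[OF S(1), of i]
      by (simp only: finite_measure_Diff measure_S less_imp_le Suc_leI)
    also have "\<dots> = measure M E / n"
      by (simp add: diff_divide_distrib[symmetric] left_diff_distrib[symmetric])
    finally show ?thesis .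
  qed
  have "disjoint_family P"
    unfolding P_def by (rule disjoint_family_Suc) (rule incseq_SucD[OF S(1)])
  then have disjoint: "disjoint_family_on P {..<n}"
    by (rule disjoint_family_on_mono[rotated]) simp
  have "measure M (\<Union>i<n. P i) = (\<Sum>i<n. measure M (P i))"
    using P_sets disjoint by (intro finite_measure_finite_Union) auto
  also have "\<dots> = measure M E"
    using measure_P n by simp
  finally have "measure M (E - (\<Union>i<n. P i)) = 0"
    using P_sets P_E E by (subst finite_measure_Diff) auto
  then have null: "E - (\<Union>i<n. P i) \<in> null_sets M"
    using P_sets E by (auto simp: emeasure_eq_measure null_sets_def)
  have lower: "upper_quantile M E h (real (Suc i) * measure M E / n) \<le> h x" if "i < n" "x \<in> P i" for i x
    using S_below[OF Suc_leI[OF that(1)]] that(2) unfolding P_def by blast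
  have upper: "h x \<le> upper_quantile M E h (real i * measure M E / n)" if "i < n" "x \<in> P i" for i x
  proof -
    have "x \<in> E" "x \<notin> S i" using P_E that unfolding P_def by blast+
    then show ?thesis using S_above[of i] that by fastforce
  qed
  show ?thesis
    by (rule that[OF P_sets measure_P disjoint null lower upper])
qed

lemma nonatomic_simple_average_le:
  fixes N :: "('a \<Rightarrow> real) \<Rightarrow> ennreal"
  assumes ri: "ri_space M N" and na: "nonatomic M" and E_pos: "0 < measure M E"
    and h_outside: "\<And>x. x \<in> space M - E \<Longrightarrow> h x = 0"
  shows "(\<integral>\<^sup>+x. h x \<partial>M) * N (indicator E) \<le> measure M E * N h"
proof -
  let ?t = "measure M E"
  define q where "q r = upper_quantile M E h r" for r
  have t_nonneg: "0 \<le> ?t" by (rule measure_nonneg)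
  have "N (indicator E) < \<infinity>"
    using banach_function_norm_indicator_finite[OF ri_space_banach_function_norm[OF ri] E]
    by (simp add: less_top[symmetric])
  then obtain \<phi> where \<phi>: "N (indicator E) = ennreal \<phi>" "0 \<le> \<phi>"
    using less_top_ennreal by auto
  have q_nonneg: "0 \<le> q (real i * ?t / n)" if "i \<le> n" for i n :: nat
  proof -
    have "real i * ?t / n \<le> ?t"
      using that E_pos by (simp add: divide_le_eq mult_right_mono)
    then show ?thesis unfolding q_def by (rule upper_quantile_nonneg)
  qed
  \<comment> \<open>Slicing \<open>E\<close> into \<open>n\<close> pieces along the quantiles of \<open>h\<close> costs at most one slice of height \<open>q 0\<close>.\<close>
  have approx: "(\<integral>\<^sup>+x. h x \<partial>M) * N (indicator E) \<le> ?t * N h + ennreal (?t / n * q 0 * \<phi>)" if n: "0 < n" for n :: nat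
  proof -
    obtain P where P_sets: "\<And>i. i < n \<Longrightarrow> P i \<in> sets M"
      and measure_P: "\<And>i. i < n \<Longrightarrow> measure M (P i) = ?t / n"
      and disjoint: "disjoint_family_on P {..<n}" and null: "E - (\<Union>i<n. P i) \<in> null_sets M"
      and lower: "\<And>i x. i < n \<Longrightarrow> x \<in> P i \<Longrightarrow> q (real (Suc i) * ?t / n) \<le> h x"
      and upper: "\<And>i x. i < n \<Longrightarrow> x \<in> P i \<Longrightarrow> h x \<le> q (real i * ?t / n)"
      using nonatomic_upper_level_partition[OF na E_pos n, folded q_def] by blast
    have "AE x in M. ennreal (h x) \<le> (\<Sum>i<n. ennreal (q (real i * ?t / n)) * indicator (P i) x)"
      using AE_not_in[OF null]
    proof (rule AE_mp[OF _ AE_I2], intro impI)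
      fix x assume x: "x \<in> space M" "x \<notin> E - (\<Union>i<n. P i)"
      show "ennreal (h x) \<le> (\<Sum>i<n. ennreal (q (real i * ?t / n)) * indicator (P i) x)"
      proof (cases "\<exists>j<n. x \<in> P j")
        case True
        then obtain j where j: "j < n" "x \<in> P j" by blast
        then have "(\<Sum>i<n. ennreal (q (real i * ?t / n)) * indicator (P i) x) = ennreal (q (real j * ?t / n))"
          by (rule step_function_eq[OF disjoint])
        then show ?thesis using upper[OF j] by (simp only: ennreal_leI)
      qed (use x h_outside in auto)
    qed
    then have "(\<integral>\<^sup>+x. h x \<partial>M) \<le> (\<integral>\<^sup>+x. (\<Sum>i<n. ennreal (q (real i * ?t / n)) * indicator (P i) x) \<partial>M)"
      by (rule nn_integral_mono_AE)
    also have "\<dots> = (\<Sum>i<n. ennreal (q (real i * ?t / n)) * emeasure M (P i))"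
      by (rule nn_integral_step_function) (use P_sets in auto)
    also have "\<dots> = (\<Sum>i<n. ennreal (q (real i * ?t / n)) * ennreal (?t / n))"
      using measure_P by (simp add: emeasure_eq_measure)
    also have "\<dots> = (\<Sum>i<n. ennreal (q (real i * ?t / n) * (?t / n)))"
      using q_nonneg t_nonneg by (intro sum.cong refl ennreal_mult[symmetric]) auto
    also have "\<dots> = ennreal (\<Sum>i<n. q (real i * ?t / n) * (?t / n))"
      using q_nonneg t_nonneg by (intro sum_ennreal) auto
    also have "(\<Sum>i<n. q (real i * ?t / n) * (?t / n)) \<le> ?t / n * q 0 + ?t / n * (\<Sum>i<n. q (real (Suc i) * ?t / n))"
    proof -
      have "(\<Sum>i<n. q (real i * ?t / n)) \<le> (\<Sum>i<Suc n. q (real i * ?t / n))"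
        using q_nonneg[of n n] by simp
      also have "\<dots> = q 0 + (\<Sum>i<n. q (real (Suc i) * ?t / n))"
        by (subst sum.lessThan_Suc_shift) simp
      finally have "?t / n * (\<Sum>i<n. q (real i * ?t / n)) \<le> ?t / n * (q 0 + (\<Sum>i<n. q (real (Suc i) * ?t / n)))"
        using t_nonneg by (intro mult_left_mono) auto
      then show ?thesis by (simp add: sum_distrib_left distrib_left mult.commute)
    qed
    also have "ennreal (?t / n * q 0 + ?t / n * (\<Sum>i<n. q (real (Suc i) * ?t / n)))
        = ennreal (?t / n * q 0) + ennreal (?t / n * (\<Sum>i<n. q (real (Suc i) * ?t / n)))"
      using q_nonneg[of 0 0] t_nonneg
      by (intro ennreal_plus mult_nonneg_nonneg sum_nonneg divide_nonneg_nonneg q_nonneg) auto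
    finally have integral_le: "(\<integral>\<^sup>+x. h x \<partial>M) \<le> \<dots>"
      by (simp add: ennreal_leI)
    have c_nonneg: "0 \<le> q (real (Suc i) * ?t / n)" if "i < n" for i
      using q_nonneg[of "Suc i" n] that by simp
    have "AE x in M. \<forall>i<n. x \<in> P i \<longrightarrow> q (real (Suc i) * ?t / n) \<le> h x"
      using lower by simp
    note minorant = ri_space_step_minorant_le[OF ri n E P_sets disjoint measure_P c_nonneg h_measurable this]
    have "(\<integral>\<^sup>+x. h x \<partial>M) * N (indicator E)
        \<le> (ennreal (?t / n * q 0) + ennreal (?t / n * (\<Sum>i<n. q (real (Suc i) * ?t / n)))) * N (indicator E)"
      using integral_le by (rule mult_right_mono) simp
    also have "\<dots> \<le> ennreal (?t / n * q 0) * ennreal \<phi> + ?t * N h"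
      unfolding distrib_right \<phi>(1)[symmetric] using minorant by (rule add_left_mono)
    also have "ennreal (?t / n * q 0) * ennreal \<phi> = ennreal (?t / n * q 0 * \<phi>)"
      using q_nonneg[of 0 n] t_nonneg \<phi>(2) by (intro ennreal_mult[symmetric]) auto
    finally show ?thesis by (simp add: add.commute)
  qed
  show ?thesis
  proof (rule ennreal_le_epsilon)
    fix e :: real assume e: "0 < e"
    obtain n :: nat where n: "?t * q 0 * \<phi> < real n * e"
      using reals_Archimedean3[OF e] by blast
    moreover have "0 \<le> ?t * q 0 * \<phi>"
      using q_nonneg[of 0 0] E_pos \<phi>(2) by simp
    ultimately have "0 < n"
      by (cases n) auto
    then have "ennreal (?t / n * q 0 * \<phi>) \<le> ennreal e"
      using n by (intro ennreal_leI) (simp add: divide_le_eq mult.commute)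
    then show "(\<integral>\<^sup>+x. h x \<partial>M) * N (indicator E) \<le> measure M E * N h + ennreal e"
      using approx[OF \<open>0 < n\<close>] by (meson add_left_mono order_trans)
  qed
qed

end

lemma atom_AE_constant:
  fixes h :: "'a \<Rightarrow> real"
  assumes A: "is_atom M A" and h: "h \<in> borel_measurable M" "finite (h ` space M)"
  shows "\<exists>v\<in>h ` A. AE x in M. x \<in> A \<longrightarrow> h x = v"
proof (rule ccontr)
  assume no_value: "\<not> ?thesis"
  have A_sets: "A \<in> sets M" and A_space: "A \<subseteq> space M"
    using A sets.sets_into_space unfolding is_atom_def by auto
  define Z where "Z v = A \<inter> {x\<in>space M. h x = v}" for v
  have Z_sets: "Z v \<in> sets M" for v
    unfolding Z_def using A_sets h(1) by measurable
  have "Z v \<in> null_sets M" if v: "v \<in> h ` A" for v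
  proof -
    have "measure M (A - Z v) \<noteq> 0"
    proof
      assume "measure M (A - Z v) = 0"
      then have "A - Z v \<in> null_sets M"
        using A_sets Z_sets by (auto simp: emeasure_eq_measure null_sets_def)
      then have "AE x in M. x \<in> A \<longrightarrow> h x = v"
        by (rule AE_I') (auto simp: Z_def)
      then show False using no_value v by blast
    qed
    moreover have "measure M (A - Z v) = measure M A - measure M (Z v)"
      using A_sets Z_sets by (intro finite_measure_Diff) (auto simp: Z_def)
    moreover have "Z v \<subseteq> A"
      unfolding Z_def by blast
    then have "measure M (Z v) = 0 \<or> measure M (Z v) = measure M A"
      using A Z_sets[of v] unfolding is_atom_def by blast
    ultimately have "measure M (Z v) = 0"
      by auto
    then show ?thesis
      using Z_sets by (auto simp: emeasure_eq_measure null_sets_def)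
  qed
  moreover have "finite (h ` A)"
    using h(2) A_space by (meson finite_subset image_mono)
  ultimately have "(\<Union>v\<in>h ` A. Z v) \<in> null_sets M"
    by (intro null_sets.finite_UN) auto
  moreover have "A = (\<Union>v\<in>h ` A. Z v)"
    unfolding Z_def using A_space by auto
  ultimately show False
    using A unfolding is_atom_def by (auto simp: emeasure_eq_measure null_sets_def)
qed

lemma equal_atomic_partition:
  assumes ea: "equal_atomic M" and E: "E \<in> sets M" and E_pos: "0 < measure M E"
  obtains k :: nat and P where "0 < k" "\<And>j. j < k \<Longrightarrow> is_atom M (P j)"
    and "\<And>j. j < k \<Longrightarrow> measure M (P j) = measure M E / k"
    and "disjoint_family_on P {..<k}" and "E - (\<Union>j<k. P j) \<in> null_sets M"
proof -
  obtain m :: nat and A where A_atom: "\<And>i. i < m \<Longrightarrow> is_atom M (A i)"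
    and measure_A: "\<And>i. i < m \<Longrightarrow> measure M (A i) = 1 / m"
    and A_disjoint: "disjoint_family_on A {..<m}" and A_cover: "(\<Union>i<m. A i) = space M"
    using ea unfolding equal_atomic_def by metis
  have A_sets: "A i \<in> sets M" if "i < m" for i
    using A_atom[OF that] unfolding is_atom_def by simp
  have measure_EA: "measure M (E \<inter> A i) = 0 \<or> measure M (E \<inter> A i) = 1 / m" if "i < m" for i
    using A_atom[OF that] measure_A[OF that] E A_sets[OF that] unfolding is_atom_def by auto
  define I where "I = {i\<in>{..<m}. measure M (E \<inter> A i) \<noteq> 0}"
  define k where "k = card I"
  obtain e where e: "bij_betw e {..<k} I"
    using ex_bij_betw_nat_finite[of I] unfolding k_def I_def by (auto simp: lessThan_atLeast0)
  have e_I: "e j \<in> I" if "j < k" for j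
    using e that unfolding bij_betw_def by auto
  define P where "P j = E \<inter> A (e j)" for j
  have P_sets: "P j \<in> sets M" if "j < k" for j
    using E A_sets e_I[OF that] unfolding P_def I_def by auto
  have measure_P: "measure M (P j) = 1 / m" if "j < k" for j
    using measure_EA e_I[OF that] unfolding P_def I_def by auto
  have disjoint: "disjoint_family_on P {..<k}"
  unfolding disjoint_family_on_def
  proof (intro ballI impI)
    fix j j' assume "j \<in> {..<k}" "j' \<in> {..<k}" "j \<noteq> j'"
    then have "e j \<noteq> e j'" "e j \<in> {..<m}" "e j' \<in> {..<m}"
      using e e_I unfolding bij_betw_def inj_on_def I_def by auto
    then show "P j \<inter> P j' = {}"
      using A_disjoint unfolding P_def disjoint_family_on_def by auto
  qed
  have "E - (\<Union>j<k. P j) \<subseteq> (\<Union>i\<in>{..<m} - I. E \<inter> A i)"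
  proof
    fix x assume x: "x \<in> E - (\<Union>j<k. P j)"
    then have "x \<in> (\<Union>i<m. A i)"
      using A_cover sets.sets_into_space[OF E] by auto
    then obtain i where i: "i < m" "x \<in> A i"
      by blast
    have "i \<notin> I"
    proof
      assume "i \<in> I"
      then obtain j where "j < k" "e j = i"
        using e unfolding bij_betw_def by auto
      then show False using x i unfolding P_def by auto
    qed
    then show "x \<in> (\<Union>i\<in>{..<m} - I. E \<inter> A i)" using x i by auto
  qed
  moreover have "(\<Union>i\<in>{..<m} - I. E \<inter> A i) \<in> null_sets M"
    using E A_sets unfolding I_def by (intro null_sets.finite_UN) (auto simp: emeasure_eq_measure null_sets_def)
  ultimately have null: "E - (\<Union>j<k. P j) \<in> null_sets M"
    using E P_sets by (blast intro: null_sets_subset)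
  have P_E: "(\<Union>j<k. P j) \<subseteq> E"
    unfolding P_def by auto
  have "measure M E = measure M ((\<Union>j<k. P j) \<union> (E - (\<Union>j<k. P j)))"
    using P_E by (simp add: Un_absorb1)
  also have "\<dots> = measure M (\<Union>j<k. P j)"
    using P_sets null by (intro measure_Un_null_set) auto
  also have "\<dots> = (\<Sum>j<k. measure M (P j))"
    using P_sets disjoint by (intro finite_measure_finite_Union) auto
  also have "\<dots> = k / m"
    using measure_P by simp
  finally have measure_E: "measure M E = k / m" .
  then have "0 < k"
    using E_pos by (cases k) auto
  have P_atom: "is_atom M (P j)" if "j < k" for j
  proof -
    have "e j < m" using e_I[OF that] unfolding I_def by simp
    then show ?thesis
      using A_atom[of "e j"] P_sets[OF that] measure_P[OF that] measure_A[of "e j"] E_pos measure_E \<open>0 < k\<close>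
      unfolding is_atom_def P_def by (auto simp: zero_less_divide_iff)
  qed
  have measure_P_E: "measure M (P j) = measure M E / k" if "j < k" for j
    using measure_P[OF that] measure_E \<open>0 < k\<close> by simp
  show ?thesis
    by (rule that[OF \<open>0 < k\<close> P_atom measure_P_E disjoint null])
qed

lemma equal_atomic_simple_average_le:
  fixes N :: "('a \<Rightarrow> real) \<Rightarrow> ennreal" and h :: "'a \<Rightarrow> real"
  assumes ri: "ri_space M N" and ea: "equal_atomic M" and E: "E \<in> sets M" and E_pos: "0 < measure M E"
    and h_measurable: "h \<in> borel_measurable M" and h_finite: "finite (h ` space M)"
    and h_nonneg: "\<And>x. x \<in> space M \<Longrightarrow> 0 \<le> h x" and h_outside: "\<And>x. x \<in> space M - E \<Longrightarrow> h x = 0"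
  shows "(\<integral>\<^sup>+x. h x \<partial>M) * N (indicator E) \<le> measure M E * N h"
proof -
  obtain k :: nat and P where k: "0 < k" and P_atom: "\<And>j. j < k \<Longrightarrow> is_atom M (P j)"
    and measure_P: "\<And>j. j < k \<Longrightarrow> measure M (P j) = measure M E / k"
    and disjoint: "disjoint_family_on P {..<k}" and null: "E - (\<Union>j<k. P j) \<in> null_sets M"
    using equal_atomic_partition[OF ea E E_pos] by metis
  have P_sets: "P j \<in> sets M" if "j < k" for j
    using P_atom[OF that] unfolding is_atom_def by simp
  have "\<forall>j. \<exists>v. j < k \<longrightarrow> v \<in> h ` P j \<and> (AE x in M. x \<in> P j \<longrightarrow> h x = v)"
    using atom_AE_constant[OF P_atom h_measurable h_finite] by blast
  then obtain c where c: "\<And>j. j < k \<Longrightarrow> c j \<in> h ` P j"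
    and c_AE: "\<And>j. j < k \<Longrightarrow> AE x in M. x \<in> P j \<longrightarrow> h x = c j"
    by metis
  have c_nonneg: "0 \<le> c j" if "j < k" for j
    using c[OF that] h_nonneg sets.sets_into_space[OF P_sets[OF that]] by auto
  have h_AE: "AE x in M. \<forall>j\<in>{..<k}. x \<in> P j \<longrightarrow> h x = c j"
    by (rule AE_finite_allI) (use c_AE in auto)
  have "AE x in M. ennreal (h x) = (\<Sum>j<k. ennreal (c j) * indicator (P j) x)"
    using h_AE AE_not_in[OF null] AE_space
  proof eventually_elim
    case (elim x)
    show ?case
    proof (cases "\<exists>j<k. x \<in> P j")
      case True
      then obtain j where j: "j < k" "x \<in> P j" by blast
      then have "(\<Sum>j<k. ennreal (c j) * indicator (P j) x) = ennreal (c j)"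
        by (rule step_function_eq[OF disjoint])
      then show ?thesis using elim j by simp
    next
      case False
      then have "h x = 0" using elim h_outside by blast
      moreover have "(\<Sum>j<k. ennreal (c j) * indicator (P j) x) = 0"
        using False by (intro step_function_outside) auto
      ultimately show ?thesis by simp
    qed
  qed
  then have "(\<integral>\<^sup>+x. h x \<partial>M) = (\<integral>\<^sup>+x. (\<Sum>j<k. ennreal (c j) * indicator (P j) x) \<partial>M)"
    by (rule nn_integral_cong_AE)
  also have "\<dots> = (\<Sum>j<k. ennreal (c j) * emeasure M (P j))"
    by (rule nn_integral_step_function) (use P_sets in auto)
  also have "\<dots> = (\<Sum>j<k. ennreal (measure M E / k * c j))"
    using measure_P c_nonneg by (intro sum.cong refl) (simp add: emeasure_eq_measure ennreal_mult'[symmetric] mult.commute)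
  also have "\<dots> = ennreal (measure M E / k * (\<Sum>j<k. c j))"
    using c_nonneg by (subst sum_ennreal) (auto simp: sum_distrib_left)
  finally have "(\<integral>\<^sup>+x. h x \<partial>M) * N (indicator E) = ennreal (measure M E / k * (\<Sum>j<k. c j)) * N (indicator E)"
    by simp
  also have "\<dots> \<le> measure M E * N h"
    by (rule ri_space_step_minorant_le[OF ri k E P_sets disjoint measure_P c_nonneg h_measurable])
      (use h_AE in \<open>auto elim: AE_mp\<close>)
  finally show ?thesis .
qed

lemma simple_average_le:
  fixes N :: "('a \<Rightarrow> real) \<Rightarrow> ennreal" and h :: "'a \<Rightarrow> real"
  assumes ri: "ri_space M N" and adm: "nonatomic M \<or> equal_atomic M"
    and E: "E \<in> sets M" and E_pos: "0 < measure M E"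
    and h_measurable: "h \<in> borel_measurable M" and h_finite: "finite (h ` space M)"
    and h_nonneg: "\<And>x. x \<in> space M \<Longrightarrow> 0 \<le> h x" and h_outside: "\<And>x. x \<in> space M - E \<Longrightarrow> h x = 0"
  shows "(\<integral>\<^sup>+x. h x \<partial>M) * N (indicator E) \<le> measure M E * N h"
  using adm
proof
  assume "nonatomic M"
  then show ?thesis
    using nonatomic_simple_average_le[OF E h_measurable h_finite h_nonneg ri _ E_pos h_outside] by blast
next
  assume "equal_atomic M"
  then show ?thesis
    by (rule equal_atomic_simple_average_le[OF ri _ E E_pos h_measurable h_finite h_nonneg h_outside])
qed

lemma ri_space_average_le:
  fixes N :: "('a \<Rightarrow> real) \<Rightarrow> ennreal" and f :: "'a \<Rightarrow> real"
  assumes ri: "ri_space M N" and adm: "nonatomic M \<or> equal_atomic M"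
    and E: "E \<in> sets M" and E_pos: "0 < measure M E" and f: "f \<in> borel_measurable M"
  shows "(\<integral>\<^sup>+x\<in>E. ennreal \<bar>f x\<bar> \<partial>M) * N (indicator E) \<le> measure M E * N f"
proof -
  have bfn: "banach_function_norm M N" using ri by (rule ri_space_banach_function_norm)
  define u where "u x = ennreal \<bar>f x\<bar> * indicator E x" for x
  have u_measurable: "u \<in> borel_measurable M"
    unfolding u_def using f E by measurable
  obtain F where F_simple: "\<And>i. simple_function M (F i)" and F_inc: "incseq F"
    and F_finite: "\<And>i x. F i x < \<top>" and F_sup: "\<And>x. (SUP i. F i x) = u x"
    using borel_measurable_implies_simple_function_sequence'[OF u_measurable] by blast
  have F_le: "F i x \<le> u x" for i x
    using F_sup[of x] by (metis SUP_upper UNIV_I)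
  define h where "h i x = enn2real (F i x)" for i x
  have h_F: "ennreal (h i x) = F i x" for i x
    unfolding h_def using F_finite by (rule ennreal_enn2real)
  have h_measurable: "h i \<in> borel_measurable M" for i
    unfolding h_def using borel_measurable_simple_function[OF F_simple] by measurable
  have h_finite: "finite (h i ` space M)" for i
    using F_simple[of i] unfolding simple_function_def h_def by (simp add: image_image[symmetric])
  have h_outside: "h i x = 0" if "x \<in> space M - E" for i x
    using F_le[of i x] that unfolding h_def u_def by simp
  have h_le_f: "\<bar>h i x\<bar> \<le> \<bar>f x\<bar>" for i x
  proof -
    have "enn2real (F i x) \<le> enn2real (u x)"
      by (rule enn2real_mono[OF F_le]) (simp add: u_def split: split_indicator)
    also have "\<dots> \<le> \<bar>f x\<bar>"
      unfolding u_def by (simp split: split_indicator)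
    finally show ?thesis unfolding h_def by simp
  qed
  have F_bound: "(\<integral>\<^sup>+x. F i x \<partial>M) * N (indicator E) \<le> measure M E * N f" for i
  proof -
    have "(\<integral>\<^sup>+x. h i x \<partial>M) * N (indicator E) \<le> measure M E * N (h i)"
      by (rule simple_average_le[OF ri adm E E_pos h_measurable h_finite]) (use h_outside in \<open>auto simp: h_def\<close>)
    also have "\<dots> \<le> measure M E * N f"
      using h_le_f by (intro mult_left_mono banach_function_norm_mono[OF bfn f h_measurable]) auto
    finally show ?thesis unfolding h_F .
  qed
  have integral_SUP: "(\<integral>\<^sup>+x\<in>E. ennreal \<bar>f x\<bar> \<partial>M) = (SUP i. \<integral>\<^sup>+x. F i x \<partial>M)"
    using nn_integral_monotone_convergence_SUP[OF F_inc borel_measurable_simple_function[OF F_simple]]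
    unfolding F_sup u_def by simp
  show ?thesis
    unfolding integral_SUP SUP_mult_right_ennreal by (rule SUP_least) (rule F_bound)
qed

lemma K_functional_indicator_ge:
  fixes N0 N1 :: "('a \<Rightarrow> real) \<Rightarrow> ennreal"
  assumes ri0: "ri_space M N0" and ri1: "ri_space M N1" and adm: "nonatomic M \<or> equal_atomic M"
    and E: "E \<in> sets M" and E_pos: "0 < measure M E"
    and a: "N0 (indicator E) = ennreal a" "0 < a" and b: "N1 (indicator E) = ennreal b" "0 < b"
  shows "1 \<le> K_functional M N0 N1 (1 / a) (1 / b) (indicator E)"
  unfolding K_functional_def
proof (rule INF_greatest, clarify)
  fix f0 f1 :: "'a \<Rightarrow> real"
  assume f0: "f0 \<in> borel_measurable M" and f1: "f1 \<in> borel_measurable M"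
    and split: "\<forall>x\<in>space M. indicator E x = f0 x + f1 x"
  define I0 where "I0 = (\<integral>\<^sup>+x\<in>E. ennreal \<bar>f0 x\<bar> \<partial>M)"
  define I1 where "I1 = (\<integral>\<^sup>+x\<in>E. ennreal \<bar>f1 x\<bar> \<partial>M)"
  have "ennreal (measure M E) = (\<integral>\<^sup>+x. indicator E x \<partial>M)"
    using E by (simp add: emeasure_eq_measure)
  also have "\<dots> \<le> (\<integral>\<^sup>+x. ennreal \<bar>f0 x\<bar> * indicator E x + ennreal \<bar>f1 x\<bar> * indicator E x \<partial>M)"
  proof (rule nn_integral_mono)
    fix x assume x: "x \<in> space M"
    show "indicator E x \<le> ennreal \<bar>f0 x\<bar> * indicator E x + ennreal \<bar>f1 x\<bar> * indicator E x"
    proof (cases "x \<in> E")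
      case True
      then have "1 = f0 x + f1 x"
        using split x by auto
      then have "1 \<le> \<bar>f0 x\<bar> + \<bar>f1 x\<bar>"
        by linarith
      then have "ennreal 1 \<le> ennreal (\<bar>f0 x\<bar> + \<bar>f1 x\<bar>)"
        by (rule ennreal_leI)
      then show ?thesis
        using True by (simp add: ennreal_plus)
    qed simp
  qed
  also have "\<dots> = I0 + I1"
    unfolding I0_def I1_def
  proof (rule nn_integral_add)
    show "(\<lambda>x. ennreal \<bar>f0 x\<bar> * indicator E x) \<in> borel_measurable M" using f0 E by measurable
    show "(\<lambda>x. ennreal \<bar>f1 x\<bar> * indicator E x) \<in> borel_measurable M" using f1 E by measurable
  qed
  also have "\<dots> = ennreal (1 / a) * (I0 * ennreal a) + ennreal (1 / b) * (I1 * ennreal b)"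
  proof -
    have "ennreal (1 / a) * ennreal a = 1" "ennreal (1 / b) * ennreal b = 1"
      using a(2) b(2) by (simp_all add: ennreal_mult[symmetric])
    then show ?thesis
      by (simp add: mult.commute mult.left_commute)
  qed
  also have "\<dots> \<le> ennreal (1 / a) * (measure M E * N0 f0) + ennreal (1 / b) * (measure M E * N1 f1)"
    using ri_space_average_le[OF ri0 adm E E_pos f0] ri_space_average_le[OF ri1 adm E E_pos f1] a b
    unfolding I0_def I1_def by (intro add_mono mult_left_mono) auto
  also have "\<dots> = measure M E * (ennreal (1 / a) * N0 f0 + ennreal (1 / b) * N1 f1)"
    by (simp add: algebra_simps)
  finally have "ennreal (measure M E) * 1 \<le> measure M E * (ennreal (1 / a) * N0 f0 + ennreal (1 / b) * N1 f1)"
    by simp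
  then show "1 \<le> ennreal (1 / a) * N0 (fst (f0, f1)) + ennreal (1 / b) * N1 (snd (f0, f1))"
    using E_pos by (subst (asm) ennreal_mult_le_mult_iff) auto
qed

lemma ri_space_indicator_pos_finite:
  assumes ri: "ri_space M N" and E: "E \<in> sets M" and E_pos: "0 < measure M E"
  obtains a where "N (indicator E) = ennreal a" "0 < a"
proof -
  have bfn: "banach_function_norm M N" using ri by (rule ri_space_banach_function_norm)
  have "N (indicator E) < \<infinity>"
    using banach_function_norm_indicator_finite[OF bfn E] by (simp add: less_top[symmetric])
  moreover have "0 < N (indicator E)"
    using E E_pos by (intro banach_function_norm_indicator_pos[OF bfn]) (auto simp: emeasure_eq_measure)
  ultimately show ?thesis
    using that by (cases "N (indicator E)" rule: ennreal_cases) auto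
qed

lemma marcinkiewicz_norm_indicator:
  fixes N0 N1 :: "('a \<Rightarrow> real) \<Rightarrow> ennreal"
  assumes ri0: "ri_space M N0" and ri1: "ri_space M N1" and adm: "nonatomic M \<or> equal_atomic M"
    and P: "class_P \<phi>" and E: "E \<in> sets M" and E_pos: "0 < measure M E"
  shows "marcinkiewicz_norm M \<phi> N0 N1 (indicator E) =
    ennreal (\<phi> (enn2real (N0 (indicator E))) (enn2real (N1 (indicator E))))"
proof -
  obtain a where a: "N0 (indicator E) = ennreal a" "0 < a"
    using ri_space_indicator_pos_finite[OF ri0 E E_pos] .
  obtain b where b: "N1 (indicator E) = ennreal b" "0 < b"
    using ri_space_indicator_pos_finite[OF ri1 E E_pos] .
  have le: "marcinkiewicz_norm M \<phi> N0 N1 (indicator E) \<le> ennreal (\<phi> a b)"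
    by (rule marcinkiewicz_norm_indicator_le[OF ri_space_banach_function_norm[OF ri0]
          ri_space_banach_function_norm[OF ri1] P E a b])
  have ge: "ennreal (\<phi> a b) \<le> marcinkiewicz_norm M \<phi> N0 N1 (indicator E)"
    by (rule marcinkiewicz_norm_indicator_ge[OF P a(2) b(2) K_functional_indicator_ge[OF ri0 ri1 adm E E_pos a b]])
  have "enn2real (N0 (indicator E)) = a" "enn2real (N1 (indicator E)) = b"
    using a b by simp_all
  then show ?thesis
    using antisym[OF le ge] by simp
qed

end

theorem lemma46:
  fixes M :: "'a measure" and N0 N1 :: "('a \<Rightarrow> real) \<Rightarrow> ennreal" and \<phi> :: "real \<Rightarrow> real \<Rightarrow> real"
  assumes "admissible_space M"
    and "ri_space M N0" and "ri_space M N1"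
    and "class_P \<phi>"
    and "t > 0" and "\<exists>E\<in>sets M. measure M E = t"
  shows "fundamental_function M (marcinkiewicz_norm M \<phi> N0 N1) t =
         ennreal (\<phi> (enn2real (fundamental_function M N0 t)) (enn2real (fundamental_function M N1 t)))"
proof -
  have ps: "prob_space M" and adm: "nonatomic M \<or> equal_atomic M"
    using assms(1) unfolding admissible_space_def by auto
  interpret prob_space M by (rule ps)
  define E where "E = (SOME E. E \<in> sets M \<and> measure M E = t)"
  have E: "E \<in> sets M" "measure M E = t"
    using someI_ex[of "\<lambda>E. E \<in> sets M \<and> measure M E = t"] assms(6) unfolding E_def by auto
  have "fundamental_function M N t = N (indicator E)" for N
    unfolding fundamental_function_def E_def ..
  moreover have "0 < measure M E"
    using E(2) assms(5) by simp
  ultimately show ?thesis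
    using marcinkiewicz_norm_indicator[OF assms(2,3) adm assms(4) E(1)] by simp
qed

end
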